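(* There exists a universal constant $c>0$ such that the following holds. For any base class $\mathcal F\subseteq\{0,1\}^{\{0,1\}^*}$, thinking length $T$ and number of thinkers $\kappa$, the rule $\kappa$-$\mathrm{Cons}_{\mathrm{CoT}}$ learns the class $\mathrm{e2e}^T(\mathcal F)$ from the CoT supervision of $\kappa$ thinkers under Instance-Dependent Sampling (with unknown identities) with sample complexity $$m(\epsilon,\delta)\le c\left(\frac{\mathrm{VCdim}(\mathcal L^T_{\mathrm{CoT}}(\mathcal F;\kappa))\log(1/\epsilon)+\log(1/\delta)}{\epsilon}\right),$$ where $\mathrm{VCdim}(\mathcal L^T_{\mathrm{CoT}}(\mathcal F;\kappa))\le c\,\kappa\cdot\mathrm{VCdim}(\mathcal F)\cdot\log(\kappa T)$.
   Context: Autoregressive generation: for $f:\{0,1\}^*\to\{0,1\}$, $\bar f(x)=(x,f(x))$; $\mathrm{e2e}^T_f(x)$ is the last bit of $\bar f^{\circ T}(x)$ and $\mathrm{CoT}^T_f(x)=(\mathrm{e2e}^1_f(x),\dots,\mathrm{e2e}^T_f(x))$; $\mathrm{e2e}^T(\mathcal F)=\{\mathrm{e2e}^T_f:f\in\mathcal F\}$. Instance-Dependent Sampling (unknown identities): an adversary chooses a distribution $\mathcal D$ on a domain $\mathcal X\subseteq\{0,1\}^*$, $h_*\in\mathrm{e2e}^T(\mathcal F)$, thinkers $f_1,\dots,f_\kappa\in\mathcal F$ with $\mathrm{e2e}^T_{f_j}\equiv h_*$, and a conditional distribution $\mathcal P(\cdot\mid x)$ on $[\kappa]$; $x^{(i)}$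 are i.i.d. from $\mathcal D$, $j^{(i)}\sim\mathcal P(\cdot\mid x^{(i)})$ independently, and the learner sees $(x^{(i)},z^{(i)})$ with $z^{(i)}=\mathrm{CoT}^T_{f_{j^{(i)}}}(x^{(i)})$. Learning with sample complexity $m(\epsilon,\delta)$: for every $\epsilon,\delta$ and every adversary choice, given $m\ge m(\epsilon,\delta)$ samples, with probability $\ge1-\delta$ the output $\hat h$ has $\Pr_{x\sim\mathcal D}[\hat h(x)\ne h_*(x)]\le\epsilon$. Rule $\kappa$-$\mathrm{Cons}_{\mathrm{CoT}}$: find $\hat f_1,\dots,\hat f_\kappa\in\mathcal F$ with $\mathrm{e2e}^T_{\hat f_1}\equiv\dots\equiv\mathrm{e2e}^T_{\hat f_\kappa}$ such that for every $i$ there is $j$ with $z^{(i)}=\mathrm{CoT}^T_{\hat f_j}(x^{(i)})$, and return $\mathrm{e2e}^T_{\hat f_j}$ for some $j$. Loss class: $\mathcal L^T_{\mathrm{CoT}}(\mathcal F;\kappa)=\{\ell_{f_1,\dots,f_\kappa}:f_1,\dots,f_\kappa\in\mathcal F,\ \mathrm{e2e}^T_{f_1}\equiv\dots\equiv\mathrm{e2e}^T_{f_\kappa}\}$, where $\ell_{f_1,\dots,f_\kappa}(x,z)=\mathbb 1\{\forall i\in[\kappa]:\mathrm{CoT}^T_{f_i}(x)\ne z\}$, a binary class on $\mathcal X\times\{0,1\}^T$. $\mathrm{VCdim}(\mathcal F)$ is the VC dimension of $\mathcal F$ as a class of functions on $\{0,1\}^*$. *)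

theory Defs
  imports "HOL-Probability.Probability"
begin

definition gen_step :: "(bool list \<Rightarrow> bool) \<Rightarrow> bool list \<Rightarrow> bool list" where
  "gen_step f x = x @ [f x]"

definition e2e :: "nat \<Rightarrow> (bool list \<Rightarrow> bool) \<Rightarrow> bool list \<Rightarrow> bool" where
  "e2e T f x = last ((gen_step f ^^ T) x)"

definition CoT :: "nat \<Rightarrow> (bool list \<Rightarrow> bool) \<Rightarrow> bool list \<Rightarrow> bool list" where
  "CoT T f x = map (\<lambda>t. e2e t f x) [1..<T+1]"

definition shatters :: "('a \<Rightarrow> bool) set \<Rightarrow> 'a set \<Rightarrow> bool" where
  "shatters H S \<longleftrightarrow> (\<forall>B \<subseteq> S. \<exists>h\<in>H. \<forall>x\<in>S. h x \<longleftrightarrow> x \<in> B)"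

definition VC_dim :: "('a \<Rightarrow> bool) set \<Rightarrow> 'a set \<Rightarrow> enat" where
  "VC_dim H A = Sup {enat (card S) | S. S \<subseteq> A \<and> finite S \<and> shatters H S}"

text \<open>Loss class L^T_CoT(F; kappa); thinkers are indexed by 0..kappa-1.
  The loss value True means loss 1.\<close>
definition loss_class :: "nat \<Rightarrow> (bool list \<Rightarrow> bool) set \<Rightarrow> nat \<Rightarrow> (bool list \<times> bool list \<Rightarrow> bool) set" where
  "loss_class T F \<kappa> =
     {(\<lambda>(x, z). \<forall>i<\<kappa>. CoT T (g i) x \<noteq> z) | g.
        (\<forall>i<\<kappa>. g i \<in> F) \<and> (\<forall>i<\<kappa>. \<forall>j<\<kappa>. e2e T (g i) = e2e T (g j))}"

definition cons_output :: "nat \<Rightarrow> (bool list \<Rightarrow> bool) set \<Rightarrow> nat \<Rightarrow> (bool list \<times> bool list) list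
     \<Rightarrow> (bool list \<Rightarrow> bool) \<Rightarrow> bool" where
  "cons_output T F \<kappa> S h \<longleftrightarrow>
     (\<exists>g. (\<forall>i<\<kappa>. g i \<in> F) \<and> (\<forall>i<\<kappa>. \<forall>j<\<kappa>. e2e T (g i) = e2e T (g j))
        \<and> (\<forall>p\<in>set S. \<exists>j<\<kappa>. snd p = CoT T (g j) (fst p))
        \<and> (\<exists>j<\<kappa>. h = e2e T (g j)))"

definition ids_example :: "nat \<Rightarrow> bool list pmf \<Rightarrow> (nat \<Rightarrow> bool list \<Rightarrow> bool) \<Rightarrow> (bool list \<Rightarrow> nat pmf)
     \<Rightarrow> (bool list \<times> bool list) pmf" where
  "ids_example T D fs P =
     bind_pmf D (\<lambda>x. bind_pmf (P x) (\<lambda>j. return_pmf (x, CoT T (fs j) x)))"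

fun iid_pmf :: "nat \<Rightarrow> 'a pmf \<Rightarrow> 'a list pmf" where
  "iid_pmf 0 p = return_pmf []"
| "iid_pmf (Suc n) p = bind_pmf p (\<lambda>a. map_pmf (\<lambda>xs. a # xs) (iid_pmf n p))"

end

theory Submission
  imports Defs
begin

text \<open>
  The loss class makes the problem realizable: the loss of a tuple \<open>g\<close> of thinkers vanishes on a
  sample exactly when \<open>g\<close> explains every chain of thought in it, the true thinkers have loss
  \<open>0\<close> almost surely, and the error of any output of \<open>\<kappa>\<close>-\<open>Cons\<^sub>C\<^sub>o\<^sub>T\<close> is at most the
  probability of the loss of the thinkers it found, because a thinker answering differently
  from \<open>h\<^sub>*\<close> at \<open>x\<close> cannot reproduce a chain of thought whose last bit is \<open>h\<^sub>* x\<close>.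
  The sample complexity is therefore that of the \<open>\<epsilon>\<close>-net theorem, proved by the double sample
  argument: symmetrization with a Chernoff bound, random swaps within the pairs of a double
  sample, and a union bound over the Sauer--Shelah-many traces on its \<open>2 m\<close> points.

  For the VC dimension, the loss of \<open>\<kappa>\<close> thinkers on \<open>n\<close> points \<open>(x, z)\<close> is determined by the
  traces of the thinkers on the at most \<open>n T\<close> prefixes \<open>x @ take t z\<close> queried along the chains
  of thought, so shattering gives \<open>2^n \<le> ((4 \<kappa> T)^d e^(n / (4 \<kappa>)))^\<kappa>\<close> by Sauer--Shelah,
  and hence \<open>n \<le> 12 \<kappa> d log (\<kappa> T)\<close>.
\<close>

section \<open>Independent samples\<close>

lemma set_iid_pmf: "xs \<in> set_pmf (iid_pmf m p) \<Longrightarrow> length xs = m \<and> set xs \<subseteq> set_pmf p"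
  by (induction m arbitrary: xs) fastforce+

lemma map_iid_pmf: "map_pmf (map f) (iid_pmf m p) = iid_pmf m (map_pmf f p)"
proof (induction m)
  case (Suc m)
  have "map_pmf (map f) (iid_pmf (Suc m) p) =
      bind_pmf p (\<lambda>a. map_pmf ((#) (f a)) (map_pmf (map f) (iid_pmf m p)))"
    by (simp add: map_bind_pmf map_pmf_comp)
  then show ?case using Suc by (simp add: bind_map_pmf)
qed simp

lemma iid_pmf_pair_pmf:
  "map_pmf (\<lambda>l. (map fst l, map snd l)) (iid_pmf m (pair_pmf A B)) = pair_pmf (iid_pmf m A) (iid_pmf m B)"
proof (induction m)
  case 0
  show ?case by (simp add: pair_return_pmf1)
next
  case (Suc m)
  have "map_pmf (\<lambda>l. (map fst l, map snd l)) (iid_pmf (Suc m) (pair_pmf A B))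
     = bind_pmf (pair_pmf A B) (\<lambda>ab. map_pmf (\<lambda>(u, v). (fst ab # u, snd ab # v))
          (pair_pmf (iid_pmf m A) (iid_pmf m B)))"
    by (simp flip: Suc add: map_bind_pmf map_pmf_comp)
  also have "\<dots> = pair_pmf (iid_pmf (Suc m) A) (iid_pmf (Suc m) B)"
    unfolding pair_pmf_def
    by (simp add: map_bind_pmf bind_map_pmf bind_assoc_pmf bind_return_pmf map_pmf_def
        cong: bind_pmf_cong) (rule bind_pmf_cong[OF refl], rule bind_commute_pmf)
  finally show ?case .
qed

lemma prob_bind_pmf:
  "measure_pmf.prob (bind_pmf A f) E = (\<integral>x. measure_pmf.prob (f x) E \<partial>measure_pmf A)"
proof -
  have "emeasure (measure_pmf (bind_pmf A f)) E = (\<integral>\<^sup>+x. emeasure (measure_pmf (f x)) E \<partial>measure_pmf A)"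
    by (rule emeasure_bind_pmf)
  also have "\<dots> = (\<integral>\<^sup>+x. ennreal (measure_pmf.prob (f x) E) \<partial>measure_pmf A)"
    by (simp add: measure_pmf.emeasure_eq_measure)
  also have "\<dots> = ennreal (\<integral>x. measure_pmf.prob (f x) E \<partial>measure_pmf A)"
    by (intro nn_integral_eq_integral measure_pmf.integrable_const_bound[where B=1]) auto
  finally show ?thesis
    by (simp add: measure_pmf.emeasure_eq_measure integral_nonneg)
qed

lemma prob_pair_pmf:
  "measure_pmf.prob (pair_pmf A B) E = (\<integral>a. measure_pmf.prob B {b. (a, b) \<in> E} \<partial>measure_pmf A)"
  by (simp add: pair_pmf_def prob_bind_pmf vimage_def flip: map_pmf_def)

lemma prob_iid_pmf_nth_in:
  assumes "I \<subseteq> {..<m}"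
  shows "measure_pmf.prob (iid_pmf m p) {xs. \<forall>i\<in>I. xs ! i \<in> A i} = (\<Prod>i\<in>I. measure_pmf.prob p (A i))"
  using assms
proof (induction m arbitrary: I A)
  case 0
  then show ?case by simp
next
  case (Suc m)
  define I' where "I' = {i. Suc i \<in> I}"
  have I': "I' \<subseteq> {..<m}" using Suc.prems by (auto simp: I'_def)
  have I_split: "I = Suc ` I' \<union> (I \<inter> {0})"
    by (auto simp: I'_def image_iff) (metis not0_implies_Suc)
  have "finite I'" using I' finite_subset by blast
  then have prod_I: "(\<Prod>i\<in>I. measure_pmf.prob p (A i)) =
      (if 0 \<in> I then measure_pmf.prob p (A 0) else 1) * (\<Prod>i\<in>I'. measure_pmf.prob p (A (Suc i)))"
    by (subst I_split, subst prod.union_disjoint) (auto simp: prod.reindex Int_insert_right)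
  have Cons_preimage: "\<And>a. Cons a -` {xs. \<forall>i\<in>I. xs ! i \<in> A i} =
      (if 0 \<in> I \<and> a \<notin> A 0 then {} else {xs. \<forall>i\<in>I'. xs ! i \<in> A (Suc i)})"
  proof -
    have "(\<forall>i\<in>I. (a # xs) ! i \<in> A i) \<longleftrightarrow>
        (0 \<in> I \<longrightarrow> a \<in> A 0) \<and> (\<forall>i\<in>I'. xs ! i \<in> A (Suc i))" for a xs
      by (auto simp: I'_def nth_Cons split: nat.split)
    then show "\<And>a. Cons a -` {xs. \<forall>i\<in>I. xs ! i \<in> A i} =
        (if 0 \<in> I \<and> a \<notin> A 0 then {} else {xs. \<forall>i\<in>I'. xs ! i \<in> A (Suc i)})"
      by auto
  qed
  have "measure_pmf.prob (iid_pmf (Suc m) p) {xs. \<forall>i\<in>I. xs ! i \<in> A i}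
     = (\<integral>a. (if 0 \<in> I \<and> a \<notin> A 0 then 0 else \<Prod>i\<in>I'. measure_pmf.prob p (A (Suc i))) \<partial>measure_pmf p)"
    unfolding iid_pmf.simps prob_bind_pmf measure_map_pmf Cons_preimage
    by (intro Bochner_Integration.integral_cong refl) (simp add: Suc.IH[OF I'])
  also have "\<dots> = (\<integral>a. indicator (if 0 \<in> I then A 0 else UNIV) a *
      (\<Prod>i\<in>I'. measure_pmf.prob p (A (Suc i))) \<partial>measure_pmf p)"
    by (intro Bochner_Integration.integral_cong) (auto simp: indicator_def)
  also have "\<dots> = (\<Prod>i\<in>I. measure_pmf.prob p (A i))"
    by (simp add: prod_I)
  finally show ?case .
qed

lemma nn_integral_exp_neg_count:
  "(\<integral>\<^sup>+xs. ennreal (exp (- real (length (filter h xs)))) \<partial>measure_pmf (iid_pmf m p))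
     = ennreal ((1 - measure_pmf.prob p {x. h x} + measure_pmf.prob p {x. h x} * exp (-1)) ^ m)"
proof (induction m)
  case 0
  then show ?case by simp
next
  case (Suc m)
  define q where "q = measure_pmf.prob p {x. h x}"
  define e where "e = (\<lambda>a. exp (- (if h a then 1 else 0::real)))"
  have q: "0 \<le> q" "q \<le> 1" by (auto simp: q_def)
  have e_integral: "(\<integral>\<^sup>+a. ennreal (e a) \<partial>measure_pmf p) = ennreal (1 - q + q * exp (-1))"
  proof -
    have "(\<integral>\<^sup>+a. ennreal (e a) \<partial>measure_pmf p) = ennreal (\<integral>a. e a \<partial>measure_pmf p)"
      by (intro nn_integral_eq_integral measure_pmf.integrable_const_bound[where B=1]) (auto simp: e_def)
    also have "(\<integral>a. e a \<partial>measure_pmf p) = (\<integral>a. 1 - (1 - exp (-1)) * indicator {x. h x} a \<partial>measure_pmf p)"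
      by (intro Bochner_Integration.integral_cong) (auto simp: e_def indicator_def)
    also have "\<dots> = 1 - (1 - exp (-1)) * q"
      by (subst Bochner_Integration.integral_diff)
        (auto simp: q_def intro!: measure_pmf.integrable_const_bound[where B=1])
    finally show ?thesis by (simp add: algebra_simps)
  qed
  have "\<And>a xs. ennreal (exp (- real (length (filter h (a # xs)))))
      = ennreal (e a) * ennreal (exp (- real (length (filter h xs))))"
    by (simp add: e_def flip: ennreal_mult exp_add)
  then have "(\<integral>\<^sup>+xs. ennreal (exp (- real (length (filter h xs)))) \<partial>measure_pmf (iid_pmf (Suc m) p))
      = (\<integral>\<^sup>+a. ennreal (e a) \<partial>measure_pmf p) * ennreal ((1 - q + q * exp (-1)) ^ m)"
    using Suc by (simp add: nn_integral_cmult nn_integral_multc q_def)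
  also have "\<dots> = ennreal ((1 - q + q * exp (-1)) ^ Suc m)"
    unfolding e_integral using q by (subst ennreal_mult[symmetric]) (auto intro!: add_nonneg_nonneg)
  finally show ?case by (simp add: q_def)
qed

lemma exp_neg_one_le_half: "exp (-1::real) \<le> 1/2"
proof -
  have "2 \<le> exp (1::real)" using exp_ge_add_one_self[of 1] by simp
  then show ?thesis by (simp add: exp_minus field_simps)
qed

text \<open>Chernoff's bound with exponent \<open>1\<close>, using \<open>1 - q + q / e \<le> exp (- q / 2)\<close>.\<close>
lemma iid_count_lower_tail:
  assumes q: "\<epsilon> < measure_pmf.prob p {x. h x}" and m: "4 \<le> \<epsilon> * m"
  shows "measure_pmf.prob (iid_pmf m p) {xs. real (length (filter h xs)) \<le> \<epsilon> * m / 4} \<le> 1/2"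
proof -
  define q where "q = measure_pmf.prob p {x. h x}"
  have q01: "0 \<le> q" "q \<le> 1" by (auto simp: q_def)
  have "emeasure (measure_pmf (iid_pmf m p)) {xs \<in> UNIV. real (length (filter h xs)) \<le> \<epsilon> * m / 4}
     \<le> ennreal (exp (1 * (\<epsilon> * m / 4))) *
       (\<integral>\<^sup>+xs. ennreal (exp (- 1 * real (length (filter h xs)))) * indicator UNIV xs
         \<partial>measure_pmf (iid_pmf m p))"
    by (rule Chernoff_ineq_nn_integral_le) auto
  also have "\<dots> = ennreal (exp (\<epsilon> * m / 4) * (1 - q + q * exp (-1)) ^ m)"
    using q01 by (simp add: nn_integral_exp_neg_count q_def add_nonneg_nonneg flip: ennreal_mult)
  finally have chernoff: "measure_pmf.prob (iid_pmf m p) {xs. real (length (filter h xs)) \<le> \<epsilon> * m / 4}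
      \<le> exp (\<epsilon> * m / 4) * (1 - q + q * exp (-1)) ^ m"
    using q01 by (simp add: measure_pmf.emeasure_eq_measure ennreal_le_iff add_nonneg_nonneg)
  have "1 - q + q * exp (-1) \<le> 1 - q / 2"
    using mult_left_mono[OF exp_neg_one_le_half q01(1)] by simp
  also have "\<dots> \<le> exp (- q / 2)" using exp_ge_add_one_self[of "-q/2"] by simp
  finally have "(1 - q + q * exp (-1)) ^ m \<le> exp (- q / 2) ^ m"
    using q01 by (intro power_mono) (auto simp: add_nonneg_nonneg)
  also have "\<dots> = exp (- q * m / 2)" by (simp add: exp_of_nat_mult[symmetric] algebra_simps)
  also have "\<dots> \<le> exp (- \<epsilon> * m / 2)" using q by (auto simp: q_def intro!: mult_right_mono divide_right_mono)
  finally have "exp (\<epsilon> * m / 4) * (1 - q + q * exp (-1)) ^ m \<le> exp (\<epsilon> * m / 4) * exp (- \<epsilon> * m / 2)"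
    by simp
  also have "\<dots> = exp (- (\<epsilon> * m / 4))" by (simp flip: exp_add)
  also have "\<dots> \<le> exp (-1)" using m by simp
  finally show ?thesis using chernoff exp_neg_one_le_half by linarith
qed

section \<open>Traces and the Sauer--Shelah lemma\<close>

definition family_shatters :: "'a set set \<Rightarrow> 'a set \<Rightarrow> bool" where
  "family_shatters R S \<longleftrightarrow> (\<forall>B\<subseteq>S. \<exists>A\<in>R. A \<inter> S = B)"

definition traces :: "('a \<Rightarrow> bool) set \<Rightarrow> 'a set \<Rightarrow> 'a set set" where
  "traces H Q = (\<lambda>h. {x\<in>Q. h x}) ` H"

lemma finite_traces: "finite Q \<Longrightarrow> finite (traces H Q)"
  by (rule finite_subset[of _ "Pow Q"]) (auto simp: traces_def)

lemma family_shatters_image_Diff: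
  assumes "x \<notin> S" "family_shatters ((\<lambda>A. A - {x}) ` R) S"
  shows "family_shatters R S"
  unfolding family_shatters_def
proof (intro allI impI)
  fix B assume "B \<subseteq> S"
  then obtain A where "A \<in> R" "(A - {x}) \<inter> S = B"
    using assms(2) unfolding family_shatters_def by blast
  then show "\<exists>A\<in>R. A \<inter> S = B" using assms(1) by blast
qed

lemma family_shatters_insert:
  assumes "x \<notin> S" "family_shatters {A\<in>R. x \<notin> A \<and> insert x A \<in> R} S"
  shows "family_shatters R (insert x S)"
  unfolding family_shatters_def
proof (intro allI impI)
  fix B assume B: "B \<subseteq> insert x S"
  then have "B - {x} \<subseteq> S" by blast
  then obtain A where A: "A \<in> R" "x \<notin> A" "insert x A \<in> R" "A \<inter> S = B - {x}"
    using assms(2) unfolding family_shatters_def by blast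
  show "\<exists>A\<in>R. A \<inter> insert x S = B"
  proof (cases "x \<in> B")
    case True
    then have "insert x A \<inter> insert x S = B" using A(4) by blast
    then show ?thesis using A(3) by blast
  next
    case False
    then have "A \<inter> insert x S = B" using A(2,4) by blast
    then show ?thesis using A(1) by blast
  qed
qed

lemma card_eq_card_Diff_image_plus:
  assumes "finite R"
  shows "card R = card ((\<lambda>A. A - {x}) ` R) + card {A\<in>R. x \<notin> A \<and> insert x A \<in> R}"
proof -
  define R0 where "R0 = {A\<in>R. x \<notin> A}"
  define R1 where "R1 = {A\<in>R. x \<in> A}"
  have "card R = card R0 + card R1"
    using assms by (subst card_Un_disjoint[symmetric]) (auto simp: R0_def R1_def intro: arg_cong[where f=card])
  also have "card R1 = card ((\<lambda>A. A - {x}) ` R1)"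
    by (rule card_image[symmetric]) (auto simp: R1_def inj_on_def)
  also have "card R0 + \<dots> = card (R0 \<union> (\<lambda>A. A - {x}) ` R1) + card (R0 \<inter> (\<lambda>A. A - {x}) ` R1)"
    using assms by (intro card_Un_Int) (auto simp: R0_def R1_def)
  also have "R0 \<union> (\<lambda>A. A - {x}) ` R1 = (\<lambda>A. A - {x}) ` R"
  proof -
    have "(\<lambda>A. A - {x}) ` R0 = R0"
      by (subst image_cong[OF refl, of _ _ id]) (auto simp: R0_def)
    moreover have "R = R0 \<union> R1" by (auto simp: R0_def R1_def)
    ultimately show ?thesis by (metis image_Un)
  qed
  also have "R0 \<inter> (\<lambda>A. A - {x}) ` R1 = {A\<in>R. x \<notin> A \<and> insert x A \<in> R}"
  proof
    show "R0 \<inter> (\<lambda>A. A - {x}) ` R1 \<subseteq> {A\<in>R. x \<notin> A \<and> insert x A \<in> R}"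
      by (auto simp: R0_def R1_def insert_absorb)
    have "A \<in> (\<lambda>A. A - {x}) ` R1" if "x \<notin> A" "insert x A \<in> R" for A
      using that by (intro image_eqI[of _ _ "insert x A"]) (auto simp: R1_def)
    then show "{A\<in>R. x \<notin> A \<and> insert x A \<in> R} \<subseteq> R0 \<inter> (\<lambda>A. A - {x}) ` R1"
      by (auto simp: R0_def)
  qed
  finally show ?thesis .
qed

lemma card_family_shattered_insert_le:
  assumes "finite Q" "x \<notin> Q"
  shows "card {S. S \<subseteq> Q \<and> family_shatters ((\<lambda>A. A - {x}) ` R) S}
      + card {S. S \<subseteq> Q \<and> family_shatters {A\<in>R. x \<notin> A \<and> insert x A \<in> R} S}
    \<le> card {S. S \<subseteq> insert x Q \<and> family_shatters R S}"
proof -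
  define Sh' where "Sh' = {S. S \<subseteq> Q \<and> family_shatters ((\<lambda>A. A - {x}) ` R) S}"
  define Sh'' where "Sh'' = {S. S \<subseteq> Q \<and> family_shatters {A\<in>R. x \<notin> A \<and> insert x A \<in> R} S}"
  have fin: "finite Sh'" "finite Sh''"
    by (rule finite_subset[of _ "Pow Q"], auto simp: assms(1) Sh'_def Sh''_def)+
  have disj: "Sh' \<inter> insert x ` Sh'' = {}" using assms(2) by (auto simp: Sh'_def)
  have "inj_on (insert x) Sh''"
  proof (rule inj_onI)
    fix A B assume "A \<in> Sh''" "B \<in> Sh''" "insert x A = insert x B"
    moreover have "x \<notin> A" "x \<notin> B" using calculation(1,2) assms(2) by (auto simp: Sh''_def)
    ultimately show "A = B" by (metis Diff_insert_absorb)
  qed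
  then have "card Sh' + card Sh'' = card (Sh' \<union> insert x ` Sh'')"
    by (simp add: card_Un_disjoint fin disj card_image)
  also have "\<dots> \<le> card {S. S \<subseteq> insert x Q \<and> family_shatters R S}"
  proof (rule card_mono)
    show "finite {S. S \<subseteq> insert x Q \<and> family_shatters R S}"
      by (rule finite_subset[of _ "Pow (insert x Q)"]) (auto simp: assms(1))
    have "S \<in> Sh' \<Longrightarrow> family_shatters R S" for S
      using family_shatters_image_Diff[of x S R] assms(2) by (auto simp: Sh'_def)
    moreover have "S \<in> Sh'' \<Longrightarrow> family_shatters R (insert x S)" for S
      using family_shatters_insert[of x S R] assms(2) by (auto simp: Sh''_def)
    ultimately show "Sh' \<union> insert x ` Sh'' \<subseteq> {S. S \<subseteq> insert x Q \<and> family_shatters R S}"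
      by (auto simp: Sh'_def Sh''_def)
  qed
  finally show ?thesis by (simp add: Sh'_def Sh''_def)
qed

lemma card_le_card_family_shattered:
  assumes "finite Q" "R \<subseteq> Pow Q"
  shows "card R \<le> card {S. S \<subseteq> Q \<and> family_shatters R S}"
  using assms
proof (induction Q arbitrary: R rule: finite_induct)
  case empty
  then have "R = {} \<or> R = {{}}" by auto
  then show ?case
  proof
    assume "R = {{}}"
    then have "{S. S \<subseteq> {} \<and> family_shatters R S} = {{}}" by (auto simp: family_shatters_def)
    then show ?thesis using \<open>R = {{}}\<close> by simp
  qed simp
next
  case (insert x Q R)
  have "finite R"
    using insert.hyps(1) insert.prems by (meson finite_Pow_iff finite_insert finite_subset)
  then have "card R = card ((\<lambda>A. A - {x}) ` R) + card {A\<in>R. x \<notin> A \<and> insert x A \<in> R}"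
    by (rule card_eq_card_Diff_image_plus)
  also have "\<dots> \<le> card {S. S \<subseteq> Q \<and> family_shatters ((\<lambda>A. A - {x}) ` R) S}
      + card {S. S \<subseteq> Q \<and> family_shatters {A\<in>R. x \<notin> A \<and> insert x A \<in> R} S}"
    using insert.prems by (intro add_mono insert.IH) auto
  also have "\<dots> \<le> card {S. S \<subseteq> insert x Q \<and> family_shatters R S}"
    using insert.hyps by (rule card_family_shattered_insert_le)
  finally show ?case .
qed

lemma card_subsets_card_le:
  assumes "finite Q"
  shows "card {S. S \<subseteq> Q \<and> card S \<le> d} = (\<Sum>i\<le>d. card Q choose i)"
proof -
  have "{S. S \<subseteq> Q \<and> card S \<le> d} = (\<Union>i\<in>{..d}. {S. S \<subseteq> Q \<and> card S = i})" by auto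
  moreover have "card (\<Union>i\<in>{..d}. {S. S \<subseteq> Q \<and> card S = i}) = (\<Sum>i\<le>d. card {S. S \<subseteq> Q \<and> card S = i})"
    by (rule card_UN_disjoint) (use assms in auto)
  ultimately show ?thesis using n_subsets[OF assms] by simp
qed

lemma sum_binomial_le_exp:
  fixes t :: real
  assumes t: "0 < t" "t \<le> 1"
  shows "real (\<Sum>i\<le>d. N choose i) \<le> (1/t)^d * exp (t * N)"
proof -
  have "real (N choose i) \<le> (1/t)^d * (real (N choose i) * t^i)" if "i \<le> d" for i
  proof -
    have "t^d \<le> t^i" using t that by (intro power_decreasing) auto
    then show ?thesis using t by (simp add: field_simps mult_right_mono)
  qed
  then have "real (\<Sum>i\<le>d. N choose i) \<le> (1/t)^d * (\<Sum>i\<le>d. real (N choose i) * t^i)"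
    by (auto simp: sum_distrib_left intro!: sum_mono)
  also have "(\<Sum>i\<le>d. real (N choose i) * t^i) \<le> (\<Sum>i\<le>max d N. real (N choose i) * t^i)"
    using t by (intro sum_mono2) auto
  also have "\<dots> = (\<Sum>i\<le>N. real (N choose i) * t^i)"
    by (rule sum.mono_neutral_right) (auto simp: binomial_eq_0_iff)
  also have "\<dots> = (1 + t)^N"
    using binomial_ring[of t 1 N] by (simp add: ac_simps)
  also have "\<dots> \<le> exp t ^ N"
    using t by (intro power_mono) (auto simp: exp_ge_add_one_self add.commute)
  also have "\<dots> = exp (t * N)" by (simp add: exp_of_nat_mult[symmetric] mult.commute)
  finally show ?thesis using t by (simp add: mult_left_mono)
qed

lemma card_le_VC_dim:
  assumes "S \<subseteq> Y" "finite S" "shatters H S"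
  shows "enat (card S) \<le> VC_dim H Y"
  unfolding VC_dim_def by (rule Sup_upper) (use assms in blast)

lemma VC_dim_le:
  assumes "\<And>S. S \<subseteq> Y \<Longrightarrow> finite S \<Longrightarrow> shatters H S \<Longrightarrow> card S \<le> d"
  shows "VC_dim H Y \<le> enat d"
  unfolding VC_dim_def by (rule Sup_least) (use assms in auto)

lemma shatters_if_family_shatters_traces:
  assumes "S \<subseteq> Q" "family_shatters (traces H Q) S"
  shows "shatters H S"
  unfolding shatters_def
proof (intro allI impI)
  fix B assume "B \<subseteq> S"
  then obtain h where "h \<in> H" "{x\<in>Q. h x} \<inter> S = B"
    using assms(2) unfolding family_shatters_def traces_def by blast
  then show "\<exists>h\<in>H. \<forall>x\<in>S. h x \<longleftrightarrow> x \<in> B" using assms(1) by blast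
qed

text \<open>Sauer--Shelah lemma, via Pajor's lemma and \<open>\<Sum>i\<le>d. N choose i \<le> t^-d (1 + t)^N\<close>.\<close>
lemma card_traces_le:
  fixes t :: real
  assumes "finite Q" "Q \<subseteq> Y" "VC_dim H Y \<le> enat d" "0 < t" "t \<le> 1"
  shows "real (card (traces H Q)) \<le> (1/t)^d * exp (t * card Q)"
proof -
  have "card (traces H Q) \<le> card {S. S \<subseteq> Q \<and> family_shatters (traces H Q) S}"
    using assms(1) by (rule card_le_card_family_shattered) (auto simp: traces_def)
  also have "\<dots> \<le> card {S. S \<subseteq> Q \<and> card S \<le> d}"
  proof (rule card_mono)
    show "finite {S. S \<subseteq> Q \<and> card S \<le> d}"
      by (rule finite_subset[of _ "Pow Q"]) (auto simp: assms(1))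
    have "enat (card S) \<le> enat d" if "S \<subseteq> Q" "family_shatters (traces H Q) S" for S
      using card_le_VC_dim[OF _ finite_subset shatters_if_family_shatters_traces] that assms(1-3)
      by (meson order_trans)
    then show "{S. S \<subseteq> Q \<and> family_shatters (traces H Q) S} \<subseteq> {S. S \<subseteq> Q \<and> card S \<le> d}"
      by auto
  qed
  also have "\<dots> = (\<Sum>i\<le>d. card Q choose i)" by (rule card_subsets_card_le[OF assms(1)])
  finally show ?thesis
    using sum_binomial_le_exp[OF assms(4,5), where d=d and N="card Q"] by linarith
qed

section \<open>\<open>\<epsilon>\<close>-nets\<close>

abbreviation fair_coin :: "bool pmf" where
  "fair_coin \<equiv> bernoulli_pmf (1/2)"

definition swap_if :: "('a \<times> 'a) \<times> bool \<Rightarrow> 'a \<times> 'a" where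
  "swap_if = (\<lambda>((x, y), b). if b then (y, x) else (x, y))"

definition swapped_samples :: "('a \<times> 'a) list \<Rightarrow> bool list \<Rightarrow> 'a list \<times> 'a list" where
  "swapped_samples W \<sigma> = (map fst (map swap_if (zip W \<sigma>)), map snd (map swap_if (zip W \<sigma>)))"

definition miss_hit_pairs :: "('a \<Rightarrow> bool) set \<Rightarrow> real \<Rightarrow> ('a list \<times> 'a list) set" where
  "miss_hit_pairs H r = {(S, S'). \<exists>h\<in>H. (\<forall>x\<in>set S. \<not> h x) \<and> r < real (length (filter h S'))}"

definition eps_net :: "'a pmf \<Rightarrow> ('a \<Rightarrow> bool) set \<Rightarrow> real \<Rightarrow> 'a list \<Rightarrow> bool" where
  "eps_net p H \<epsilon> S \<longleftrightarrow>
    (\<forall>h\<in>H. \<epsilon> < measure_pmf.prob p {x. h x} \<longrightarrow> (\<exists>x\<in>set S. h x))"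

lemma map_swap_if_pair_pmf: "map_pmf swap_if (pair_pmf (pair_pmf p p) c) = pair_pmf p p"
proof -
  have "map_pmf (\<lambda>w. swap_if (w, b)) (pair_pmf p p) = pair_pmf p p" for b
  proof (cases b)
    case True
    then have "map_pmf (\<lambda>w. swap_if (w, b)) (pair_pmf p p) = map_pmf (\<lambda>(x, y). (y, x)) (pair_pmf p p)"
      by (intro pmf.map_cong) (auto simp: swap_if_def)
    also have "\<dots> = pair_pmf p p" by (rule pair_commute_pmf[symmetric])
    finally show ?thesis .
  next
    case False
    then have "map_pmf (\<lambda>w. swap_if (w, b)) (pair_pmf p p) = map_pmf id (pair_pmf p p)"
      by (intro pmf.map_cong) (auto simp: swap_if_def)
    then show ?thesis by simp
  qed
  moreover have "map_pmf swap_if (pair_pmf (pair_pmf p p) c)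
      = bind_pmf c (\<lambda>b. map_pmf (\<lambda>w. swap_if (w, b)) (pair_pmf p p))"
    by (subst pair_commute_pmf)
      (simp add: pair_pmf_def[of c] map_pmf_def bind_assoc_pmf bind_return_pmf)
  ultimately show ?thesis by simp
qed

lemma prob_double_sample_swap:
  "measure_pmf.prob (pair_pmf (iid_pmf m p) (iid_pmf m p)) J =
   (\<integral>W. measure_pmf.prob (iid_pmf m c) {\<sigma>. swapped_samples W \<sigma> \<in> J} \<partial>measure_pmf (iid_pmf m (pair_pmf p p)))"
proof -
  have "measure_pmf.prob (pair_pmf (iid_pmf m p) (iid_pmf m p)) J
      = measure_pmf.prob (iid_pmf m (pair_pmf p p)) {W. (map fst W, map snd W) \<in> J}"
    by (simp flip: iid_pmf_pair_pmf add: vimage_def)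
  also have "iid_pmf m (pair_pmf p p) = map_pmf (map swap_if) (iid_pmf m (pair_pmf (pair_pmf p p) c))"
    by (simp add: map_iid_pmf map_swap_if_pair_pmf)
  also have "measure_pmf.prob \<dots> {W. (map fst W, map snd W) \<in> J}
      = measure_pmf.prob (iid_pmf m (pair_pmf (pair_pmf p p) c))
          {Z. swapped_samples (map fst Z) (map snd Z) \<in> J}"
    by (simp add: swapped_samples_def vimage_def zip_map_fst_snd)
  also have "\<dots> = measure_pmf.prob (pair_pmf (iid_pmf m (pair_pmf p p)) (iid_pmf m c))
      {(W, \<sigma>). swapped_samples W \<sigma> \<in> J}"
    by (simp flip: iid_pmf_pair_pmf add: vimage_def)
  finally show ?thesis by (simp add: prob_pair_pmf)
qed

lemma length_swapped_samples:
  "length (fst (swapped_samples W \<sigma>)) = min (length W) (length \<sigma>)"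
  "length (snd (swapped_samples W \<sigma>)) = min (length W) (length \<sigma>)"
  by (simp_all add: swapped_samples_def)

lemma nth_swapped_samples:
  assumes "i < length W" "i < length \<sigma>"
  shows "fst (swapped_samples W \<sigma>) ! i = (if \<sigma> ! i then snd (W ! i) else fst (W ! i))"
    and "snd (swapped_samples W \<sigma>) ! i = (if \<sigma> ! i then fst (W ! i) else snd (W ! i))"
  using assms by (cases "W ! i"; simp add: swapped_samples_def swap_if_def)+

lemma set_swapped_samples_subset:
  "set (fst (swapped_samples W \<sigma>)) \<union> set (snd (swapped_samples W \<sigma>)) \<subseteq> fst ` set W \<union> snd ` set W"
  by (auto simp: swapped_samples_def swap_if_def dest!: set_zip_leftD split: if_splits)
    (force dest: set_zip_leftD)+

lemma half_pow_le_exp: "(1/2::real) ^ k \<le> exp (- real k / 2)"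
proof -
  have "(1/2::real) ^ k \<le> exp (-1/2) ^ k"
    using exp_half_le2 by (intro power_mono) (auto simp: exp_minus field_simps)
  then show ?thesis by (simp add: exp_of_nat_mult[symmetric])
qed

text \<open>Every pair of \<open>W\<close> meeting \<open>A\<close> has its coin flip forced by the event, and more than \<open>r\<close>
  pairs meet \<open>A\<close>.\<close>
lemma prob_swapped_samples_miss_hit_le:
  assumes "length W = m"
  shows "measure_pmf.prob (iid_pmf m fair_coin)
      {\<sigma>. swapped_samples W \<sigma> \<in> miss_hit_pairs {\<lambda>y. y \<in> A} r} \<le> exp (- r / 2)"
    (is "measure_pmf.prob _ ?E \<le> _")
proof (cases "?E = {}")
  case True
  then show ?thesis by (simp only: measure_empty) simp
next
  case False
  define I where "I = {i. i < m \<and> (fst (W ! i) \<in> A \<or> snd (W ! i) \<in> A)}"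
  have I: "I \<subseteq> {..<m}" "finite I" by (auto simp: I_def)
  have count_le: "length (filter (\<lambda>y. y \<in> A) (snd (swapped_samples W \<sigma>))) \<le> card I" for \<sigma>
  proof -
    let ?S' = "snd (swapped_samples W \<sigma>)"
    have "{i. i < length ?S' \<and> ?S' ! i \<in> A} \<subseteq> I"
      using assms by (auto simp: I_def length_swapped_samples nth_swapped_samples split: if_splits)
    then show ?thesis
      by (simp only: length_filter_conv_card) (rule card_mono[OF I(2)])
  qed
  from False obtain \<sigma> where "\<sigma> \<in> ?E" by blast
  then have "r < real (length (filter (\<lambda>y. y \<in> A) (snd (swapped_samples W \<sigma>))))"
    by (auto simp: miss_hit_pairs_def split: prod.splits)
  then have r_less: "r < card I"
    using count_le[of \<sigma>] by (meson less_le_trans of_nat_le_iff)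
  have "?E \<inter> set_pmf (iid_pmf m fair_coin) \<subseteq> {\<sigma>. \<forall>i\<in>I. \<sigma> ! i \<in> {fst (W ! i) \<in> A}}"
  proof (intro subsetI CollectI ballI)
    fix \<sigma> i assume \<sigma>: "\<sigma> \<in> ?E \<inter> set_pmf (iid_pmf m fair_coin)" and "i \<in> I"
    then have i: "i < length W" "i < length \<sigma>" using set_iid_pmf assms by (fastforce simp: I_def)+
    then have "fst (swapped_samples W \<sigma>) ! i \<in> set (fst (swapped_samples W \<sigma>))"
      by (simp add: length_swapped_samples)
    then have "fst (swapped_samples W \<sigma>) ! i \<notin> A"
      using \<sigma> by (auto simp: miss_hit_pairs_def split: prod.splits)
    then show "\<sigma> ! i \<in> {fst (W ! i) \<in> A}"
      using \<open>i \<in> I\<close> by (auto simp: I_def nth_swapped_samples[OF i] split: if_splits)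
  qed
  then have "measure_pmf.prob (iid_pmf m fair_coin) ?E \<le>
      measure_pmf.prob (iid_pmf m fair_coin) {\<sigma>. \<forall>i\<in>I. \<sigma> ! i \<in> {fst (W ! i) \<in> A}}"
    by (subst measure_Int_set_pmf[symmetric]) (rule measure_pmf.finite_measure_mono, auto)
  also have "\<dots> = (1/2) ^ card I"
    by (subst prob_iid_pmf_nth_in[OF I(1)]) (simp add: measure_pmf_single)
  also have "\<dots> \<le> exp (- real (card I) / 2)" by (rule half_pow_le_exp)
  also have "\<dots> \<le> exp (- r / 2)" using r_less by simp
  finally show ?thesis .
qed

lemma miss_hit_pairs_subset_traces:
  assumes "set S \<union> set S' \<subseteq> Q" "(S, S') \<in> miss_hit_pairs H r"
  shows "(S, S') \<in> (\<Union>A\<in>traces H Q. miss_hit_pairs {\<lambda>y. y \<in> A} r)"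
proof -
  obtain h where h: "h \<in> H" "\<forall>x\<in>set S. \<not> h x" "r < real (length (filter h S'))"
    using assms(2) by (auto simp: miss_hit_pairs_def)
  have "filter h S' = filter (\<lambda>y. y \<in> {x\<in>Q. h x}) S'"
    using assms(1) by (intro filter_cong) auto
  then have "(S, S') \<in> miss_hit_pairs {\<lambda>y. y \<in> {x\<in>Q. h x}} r"
    using h(2,3) by (auto simp: miss_hit_pairs_def)
  then show ?thesis using h(1) by (auto simp: traces_def)
qed

lemma prob_swapped_samples_miss_hit_VC_le:
  fixes t r :: real
  assumes "length W = m" "set W \<subseteq> Y \<times> Y" "VC_dim H Y \<le> enat d" "0 < t" "t \<le> 1"
  shows "measure_pmf.prob (iid_pmf m fair_coin) {\<sigma>. swapped_samples W \<sigma> \<in> miss_hit_pairs H r}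
    \<le> (1/t)^d * exp (t * (2 * m)) * exp (- r / 2)"
proof -
  define Q where "Q = fst ` set W \<union> snd ` set W"
  define E where "E = (\<lambda>A. {\<sigma>. swapped_samples W \<sigma> \<in> miss_hit_pairs {\<lambda>y. y \<in> A} r})"
  have Q: "finite Q" "Q \<subseteq> Y" using assms(2) by (auto simp: Q_def)
  have "card Q \<le> card (fst ` set W) + card (snd ` set W)" unfolding Q_def by (rule card_Un_le)
  also have "\<dots> \<le> 2 * m"
    using card_image_le[of "set W" fst] card_image_le[of "set W" snd] card_length[of W] assms(1)
    by simp
  finally have card_Q: "card Q \<le> 2 * m" .
  have "{\<sigma>. swapped_samples W \<sigma> \<in> miss_hit_pairs H r} \<subseteq> (\<Union>A\<in>traces H Q. E A)"
    using miss_hit_pairs_subset_traces[OF set_swapped_samples_subset[of W], folded Q_def]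
    by (force simp: E_def)
  then have "measure_pmf.prob (iid_pmf m fair_coin) {\<sigma>. swapped_samples W \<sigma> \<in> miss_hit_pairs H r}
      \<le> measure_pmf.prob (iid_pmf m fair_coin) (\<Union>A\<in>traces H Q. E A)"
    by (rule measure_pmf.finite_measure_mono) simp
  also have "\<dots> \<le> (\<Sum>A\<in>traces H Q. measure_pmf.prob (iid_pmf m fair_coin) (E A))"
    using Q(1) by (intro measure_UNION_le finite_traces) auto
  also have "\<dots> \<le> (\<Sum>A\<in>traces H Q. exp (- r / 2))"
    unfolding E_def by (intro sum_mono prob_swapped_samples_miss_hit_le assms(1))
  also have "\<dots> \<le> (1/t)^d * exp (t * card Q) * exp (- r / 2)"
    using card_traces_le[OF Q assms(3-5)] by (simp add: mult_right_mono)
  also have "\<dots> \<le> (1/t)^d * exp (t * (2 * m)) * exp (- r / 2)"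
    using card_Q assms(4) by (intro mult_right_mono mult_left_mono) (auto simp flip: of_nat_mult)
  finally show ?thesis .
qed

text \<open>Symmetrization: a hypothesis of probability \<open>> \<epsilon>\<close> missed by the first sample is hit
  more than \<open>\<epsilon> m / 4\<close> times by an independent second sample with probability \<open>\<ge> 1/2\<close>.\<close>
lemma prob_not_eps_net_le_double_sample:
  assumes "4 \<le> \<epsilon> * m"
  shows "measure_pmf.prob (iid_pmf m p) {S. \<not> eps_net p H \<epsilon> S}
    \<le> 2 * measure_pmf.prob (pair_pmf (iid_pmf m p) (iid_pmf m p)) (miss_hit_pairs H (\<epsilon> * m / 4))"
proof -
  define f where "f = (\<lambda>S. measure_pmf.prob (iid_pmf m p) {S'. (S, S') \<in> miss_hit_pairs H (\<epsilon> * m / 4)})"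
  have f_ge: "indicator {S. \<not> eps_net p H \<epsilon> S} S / 2 \<le> f S" for S
  proof (cases "eps_net p H \<epsilon> S")
    case False
    then obtain h where h: "h \<in> H" "\<forall>x\<in>set S. \<not> h x" "\<epsilon> < measure_pmf.prob p {x. h x}"
      unfolding eps_net_def by blast
    define Few where "Few = {xs. real (length (filter h xs)) \<le> \<epsilon> * m / 4}"
    have "1/2 \<le> 1 - measure_pmf.prob (iid_pmf m p) Few"
      using iid_count_lower_tail[OF h(3) assms] by (simp add: Few_def)
    also have "\<dots> = measure_pmf.prob (iid_pmf m p) (UNIV - Few)"
      using measure_pmf.prob_compl[of Few "iid_pmf m p"] by simp
    also have "\<dots> \<le> f S" unfolding f_def
      by (rule measure_pmf.finite_measure_mono) (use h in \<open>auto simp: Few_def miss_hit_pairs_def\<close>)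
    finally show ?thesis using False by simp
  qed (simp add: f_def)
  have "measure_pmf.prob (iid_pmf m p) {S. \<not> eps_net p H \<epsilon> S} / 2
      = (\<integral>S. indicator {S. \<not> eps_net p H \<epsilon> S} S / 2 \<partial>measure_pmf (iid_pmf m p))"
    by simp
  also have "\<dots> \<le> (\<integral>S. f S \<partial>measure_pmf (iid_pmf m p))"
    using f_ge unfolding f_def
    by (intro integral_mono measure_pmf.integrable_const_bound[where B=1])
      (auto intro!: AE_pmfI split: split_indicator)
  also have "\<dots> = measure_pmf.prob (pair_pmf (iid_pmf m p) (iid_pmf m p)) (miss_hit_pairs H (\<epsilon> * m / 4))"
    by (simp add: prob_pair_pmf f_def)
  finally show ?thesis by simp
qed

lemma prob_double_sample_miss_hit_le:
  fixes t r :: real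
  assumes "set_pmf p \<subseteq> Y" "VC_dim H Y \<le> enat d" "0 < t" "t \<le> 1"
  shows "measure_pmf.prob (pair_pmf (iid_pmf m p) (iid_pmf m p)) (miss_hit_pairs H r)
    \<le> (1/t)^d * exp (t * (2 * m)) * exp (- r / 2)"
  unfolding prob_double_sample_swap[where c = fair_coin]
proof (rule measure_pmf.integral_le_const)
  show "integrable (measure_pmf (iid_pmf m (pair_pmf p p)))
      (\<lambda>W. measure_pmf.prob (iid_pmf m fair_coin) {\<sigma>. swapped_samples W \<sigma> \<in> miss_hit_pairs H r})"
    by (intro measure_pmf.integrable_const_bound[where B=1]) auto
  have "length W = m \<and> set W \<subseteq> Y \<times> Y" if "W \<in> set_pmf (iid_pmf m (pair_pmf p p))" for W
    using set_iid_pmf[OF that] assms(1) by auto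
  then show "AE W in measure_pmf (iid_pmf m (pair_pmf p p)).
      measure_pmf.prob (iid_pmf m fair_coin) {\<sigma>. swapped_samples W \<sigma> \<in> miss_hit_pairs H r}
      \<le> (1/t)^d * exp (t * (2 * m)) * exp (- r / 2)"
    using prob_swapped_samples_miss_hit_VC_le[OF _ _ assms(2-4)] by (blast intro: AE_pmfI)
qed

theorem prob_not_eps_net_le:
  assumes "set_pmf p \<subseteq> Y" "VC_dim H Y \<le> enat d" "0 < \<epsilon>" "\<epsilon> \<le> 1" "4 \<le> \<epsilon> * m"
  shows "measure_pmf.prob (iid_pmf m p) {S. \<not> eps_net p H \<epsilon> S} \<le> 2 * (32/\<epsilon>)^d * exp (- \<epsilon> * m / 16)"
proof -
  have "measure_pmf.prob (iid_pmf m p) {S. \<not> eps_net p H \<epsilon> S}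
      \<le> 2 * ((1/(\<epsilon>/32))^d * exp (\<epsilon>/32 * (2 * m)) * exp (- (\<epsilon> * m / 4) / 2))"
    using prob_not_eps_net_le_double_sample[OF assms(5), of p H]
      prob_double_sample_miss_hit_le[OF assms(1,2), of "\<epsilon>/32" m "\<epsilon> * m / 4"] assms(3,4)
    by simp
  also have "\<dots> = 2 * (32/\<epsilon>)^d * exp (- \<epsilon> * m / 16)"
    by (simp add: mult_ac flip: exp_add)
  finally show ?thesis .
qed

lemma VC_dim_zero_imp_vanish:
  assumes "VC_dim H Y \<le> 0" "h0 \<in> H" "\<not> h0 x" "x \<in> Y" "h \<in> H"
  shows "\<not> h x"
proof
  assume "h x"
  have "shatters H {x}"
    unfolding shatters_def
  proof (intro allI impI)
    fix B assume "B \<subseteq> {x}"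
    then consider "B = {}" | "B = {x}" by blast
    then show "\<exists>h\<in>H. \<forall>y\<in>{x}. h y \<longleftrightarrow> y \<in> B"
      by cases (use assms(2,3,5) \<open>h x\<close> in auto)
  qed
  then have "enat (card {x}) \<le> 0"
    using card_le_VC_dim[of "{x}" Y H] assms(1,4) by simp
  then show False by (simp add: enat_0[symmetric])
qed

lemma eps_net_sample_size:
  fixes \<epsilon> \<delta> :: real
  assumes d: "1 \<le> d" and \<epsilon>: "0 < \<epsilon>" "\<epsilon> < 1/2" and \<delta>: "0 < \<delta>" "\<delta> < 1"
    and m: "120 * (real d * ln (1/\<epsilon>) + ln (1/\<delta>)) \<le> \<epsilon> * m"
  shows "4 \<le> \<epsilon> * m" "2 * (32/\<epsilon>)^d * exp (- \<epsilon> * m / 16) \<le> \<delta>"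
proof -
  define L where "L = ln (1/\<epsilon>)"
  have ln2: "1/2 \<le> ln (2::real)"
    using exp_half_le2 ln_le_cancel_iff[of "exp (1/2)" 2] by simp
  have "ln 2 \<le> L" unfolding L_def using \<epsilon> by (subst ln_le_cancel_iff) (auto simp: field_simps)
  then have L: "1/2 \<le> L" "L \<le> real d * L" "ln (2::real) \<le> L" using d ln2 by (auto simp: mult_le_cancel_right1)
  have ln\<delta>: "0 \<le> ln (1/\<delta>)" "ln \<delta> = - ln (1/\<delta>)" using \<delta> by (auto simp: ln_div)
  have m': "120 * (real d * L) + 120 * ln (1/\<delta>) \<le> \<epsilon> * m" using m by (simp add: L_def)
  then show "4 \<le> \<epsilon> * m" using L ln\<delta> by linarith
  have "ln (32/\<epsilon>) = 5 * ln 2 + L"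
    using \<epsilon> ln_realpow[of 2 5] by (simp add: L_def ln_div)
  then have "real d * ln (32/\<epsilon>) \<le> 6 * (real d * L)"
    using L by (simp add: algebra_simps mult_left_mono)
  then have "ln 2 + real d * ln (32/\<epsilon>) - \<epsilon> * m / 16 \<le> ln \<delta>"
    using m' L ln\<delta> by linarith
  moreover have "2 * (32/\<epsilon>)^d * exp (- \<epsilon> * m / 16) = exp (ln 2 + real d * ln (32/\<epsilon>) - \<epsilon> * m / 16)"
  proof -
    have "2 * (32/\<epsilon>)^d * exp (- \<epsilon> * m / 16)
        = exp (ln 2) * exp (real d * ln (32/\<epsilon>)) * exp (- (\<epsilon> * m / 16))"
      using \<epsilon> by (simp add: exp_of_nat_mult)
    also have "\<dots> = exp (ln 2 + real d * ln (32/\<epsilon>) - \<epsilon> * m / 16)"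
      by (simp only: exp_diff exp_add exp_minus divide_inverse)
    finally show ?thesis .
  qed
  ultimately have "2 * (32/\<epsilon>)^d * exp (- \<epsilon> * m / 16) \<le> exp (ln \<delta>)"
    by (simp only: exp_le_cancel_iff)
  then show "2 * (32/\<epsilon>)^d * exp (- \<epsilon> * m / 16) \<le> \<delta>"
    using \<delta> by simp
qed

text \<open>The realizer \<open>h0\<close> is only needed when \<open>d = 0\<close>, where it forces every member of \<open>H\<close> to
  vanish almost surely.\<close>
theorem prob_eps_net_ge:
  assumes p: "set_pmf p \<subseteq> Y" and VC: "VC_dim H Y \<le> enat d"
    and h0: "h0 \<in> H" "\<forall>x\<in>set_pmf p. \<not> h0 x"
    and \<epsilon>: "0 < \<epsilon>" "\<epsilon> < 1/2" and \<delta>: "0 < \<delta>" "\<delta> < 1"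
    and m: "120 * ((real d * ln (1/\<epsilon>) + ln (1/\<delta>)) / \<epsilon>) \<le> m"
  shows "1 - \<delta> \<le> measure_pmf.prob (iid_pmf m p) {S. eps_net p H \<epsilon> S}"
proof (cases "d = 0")
  case True
  have "measure_pmf.prob p {x. h x} = 0" if "h \<in> H" for h
  proof -
    have "{x. h x} \<inter> set_pmf p = {}"
      using VC_dim_zero_imp_vanish[of H Y h0 _ h] VC True h0 p that by (auto simp: enat_0)
    then show ?thesis by (metis measure_Int_set_pmf measure_empty)
  qed
  then have "{S. eps_net p H \<epsilon> S} = UNIV" using \<epsilon>(1) by (auto simp: eps_net_def)
  then show ?thesis using \<delta> by simp
next
  case False
  have "120 * (real d * ln (1/\<epsilon>) + ln (1/\<delta>)) \<le> \<epsilon> * m"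
    using mult_left_mono[OF m, of \<epsilon>] \<epsilon> by simp
  note size = eps_net_sample_size[OF _ \<epsilon> \<delta> this]
  have "1 - \<delta> \<le> 1 - measure_pmf.prob (iid_pmf m p) {S. \<not> eps_net p H \<epsilon> S}"
    using prob_not_eps_net_le[OF p VC \<epsilon>(1) _ size(1)] size(2) False \<epsilon>(2) by simp
  also have "\<dots> = measure_pmf.prob (iid_pmf m p) {S. eps_net p H \<epsilon> S}"
    using measure_pmf.prob_compl[of "{S. \<not> eps_net p H \<epsilon> S}" "iid_pmf m p"]
    by (simp add: Compl_eq_Diff_UNIV[symmetric] Collect_neg_eq[symmetric])
  finally show ?thesis .
qed

section \<open>Chains of thought and the loss class\<close>

lemma e2e_Suc: "e2e (Suc t) g x = g ((gen_step g ^^ t) x)"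
  by (simp add: e2e_def gen_step_def)

lemma CoT_Suc_e2e: "CoT (Suc t) g x = CoT t g x @ [e2e (Suc t) g x]"
  by (simp add: CoT_def)

lemma funpow_gen_step: "(gen_step g ^^ t) x = x @ CoT t g x"
proof (induction t)
  case (Suc t)
  have "(gen_step g ^^ Suc t) x = (x @ CoT t g x) @ [g (x @ CoT t g x)]"
    by (simp add: Suc.IH gen_step_def)
  then show ?case by (simp add: CoT_Suc_e2e e2e_Suc Suc.IH)
qed (simp add: CoT_def)

lemma CoT_Suc: "CoT (Suc t) g x = CoT t g x @ [g (x @ CoT t g x)]"
  by (simp add: CoT_Suc_e2e e2e_Suc funpow_gen_step)

lemma length_CoT [simp]: "length (CoT T g x) = T"
  by (simp add: CoT_def)

lemma last_CoT: "1 \<le> T \<Longrightarrow> last (CoT T g x) = e2e T g x"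
  by (cases T) (auto simp: CoT_Suc_e2e)

lemma CoT_eq_iff:
  "length z = T \<Longrightarrow> CoT T g x = z \<longleftrightarrow> (\<forall>t<T. g (x @ take t z) = z ! t)"
proof (induction T arbitrary: z)
  case 0
  then show ?case by (simp add: CoT_def)
next
  case (Suc T)
  then obtain z' a where z: "z = z' @ [a]" and z': "length z' = T"
    by (metis length_Suc_conv_rev)
  have "CoT (Suc T) g x = z \<longleftrightarrow> CoT T g x = z' \<and> g (x @ z') = a"
    by (auto simp: CoT_Suc z)
  also have "\<dots> \<longleftrightarrow> (\<forall>t<T. g (x @ take t z') = z' ! t) \<and> g (x @ z') = a"
    using Suc.IH[OF z'] by simp
  also have "\<dots> \<longleftrightarrow> (\<forall>t<Suc T. g (x @ take t z) = z ! t)"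
    using z z' by (auto simp: less_Suc_eq nth_append)
  finally show ?case .
qed

definition cot_prefixes :: "(bool list \<times> bool list) set \<Rightarrow> nat \<Rightarrow> bool list set" where
  "cot_prefixes S T = (\<lambda>((x, z), t). x @ take t z) ` (S \<times> {..<T})"

lemma card_cot_prefixes_le: "finite S \<Longrightarrow> card (cot_prefixes S T) \<le> card S * T"
  unfolding cot_prefixes_def
  by (metis card_cartesian_product card_image_le card_lessThan finite_SigmaI finite_lessThan)

lemma CoT_eq_iff_cot_prefixes:
  assumes "(x, z) \<in> S" "S \<subseteq> UNIV \<times> {z. length z = T}"
  shows "CoT T f x = z \<longleftrightarrow> (\<forall>t<T. (x @ take t z \<in> {q \<in> cot_prefixes S T. f q}) = z ! t)"
proof -
  have "x @ take t z \<in> cot_prefixes S T" if "t < T" for t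
    unfolding cot_prefixes_def using assms(1) that by force
  then show ?thesis
    using CoT_eq_iff[of z T f x] assms by auto
qed

text \<open>On \<open>S\<close>, the loss of \<open>\<kappa>\<close> thinkers only depends on their traces on \<open>cot_prefixes S T\<close>.\<close>
lemma two_pow_card_le_card_traces_pow:
  assumes "finite S" "S \<subseteq> UNIV \<times> {z. length z = T}" "shatters (loss_class T F \<kappa>) S"
  shows "2 ^ card S \<le> card (traces F (cot_prefixes S T)) ^ \<kappa>"
proof -
  define Q where "Q = cot_prefixes S T"
  define loss_on_S where
    "loss_on_S = (\<lambda>v. {(x, z) \<in> S. \<forall>i<\<kappa>. \<not> (\<forall>t<T. (x @ take t z \<in> v i) = z ! t)})"
  have "Pow S \<subseteq> loss_on_S ` (PiE {..<\<kappa>} (\<lambda>_. traces F Q))"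
  proof
    fix B assume "B \<in> Pow S"
    then obtain h where "h \<in> loss_class T F \<kappa>" and h: "\<forall>s\<in>S. h s \<longleftrightarrow> s \<in> B"
      using assms(3) unfolding shatters_def by blast
    then obtain g where g: "\<forall>i<\<kappa>. g i \<in> F" and h_def: "h = (\<lambda>(x, z). \<forall>i<\<kappa>. CoT T (g i) x \<noteq> z)"
      unfolding loss_class_def by blast
    define v where "v = restrict (\<lambda>i. {q\<in>Q. g i q}) {..<\<kappa>}"
    have "B = loss_on_S v"
    proof (intro set_eqI)
      fix s
      show "s \<in> B \<longleftrightarrow> s \<in> loss_on_S v"
      proof (cases "s \<in> S")
        case True
        obtain x z where s: "s = (x, z)" by fastforce
        have "(\<forall>i<\<kappa>. CoT T (g i) x \<noteq> z) \<longleftrightarrow>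
            (\<forall>i<\<kappa>. \<not> (\<forall>t<T. (x @ take t z \<in> v i) = z ! t))"
          using CoT_eq_iff_cot_prefixes[of x z S T] True s assms(2) by (simp add: v_def Q_def)
        then show ?thesis using h True s by (auto simp: loss_on_S_def h_def)
      next
        case False
        then show ?thesis using \<open>B \<in> Pow S\<close> by (auto simp: loss_on_S_def)
      qed
    qed
    moreover have "v \<in> PiE {..<\<kappa>} (\<lambda>_. traces F Q)" using g by (auto simp: v_def traces_def)
    ultimately show "B \<in> loss_on_S ` (PiE {..<\<kappa>} (\<lambda>_. traces F Q))" by blast
  qed
  moreover have fin: "finite (PiE {..<\<kappa>} (\<lambda>_. traces F Q))"
    using assms(1) by (simp add: finite_PiE finite_traces Q_def cot_prefixes_def)
  ultimately have "card (Pow S) \<le> card (loss_on_S ` (PiE {..<\<kappa>} (\<lambda>_. traces F Q)))"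
    by (intro card_mono) auto
  also have "\<dots> \<le> card (PiE {..<\<kappa>} (\<lambda>_. traces F Q))" using fin by (rule card_image_le)
  finally show ?thesis using assms(1) by (simp add: card_Pow card_PiE Q_def)
qed

lemma le_of_two_pow_le:
  assumes "2 ^ n \<le> (4 * real \<kappa> * real T) ^ (d * \<kappa>) * exp (real n / 4)" "1 \<le> \<kappa>" "1 \<le> T"
  shows "real n \<le> 12 * real \<kappa> * real d * max 1 (ln (real \<kappa> * real T))"
proof -
  have pos: "1 \<le> real \<kappa> * real T" using assms(2,3) mult_mono[of 1 "real \<kappa>" 1 "real T"] by simp
  have "exp (real n / 4) * exp (real n / 4) = exp (1/2) ^ n"
    by (simp flip: exp_add exp_of_nat_mult)
  also have "\<dots> \<le> 2 ^ n" using exp_half_le2 by (intro power_mono) auto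
  also have "\<dots> \<le> (4 * real \<kappa> * real T) ^ (d * \<kappa>) * exp (real n / 4)" by (rule assms(1))
  finally have "exp (real n / 4) \<le> (4 * real \<kappa> * real T) ^ (d * \<kappa>)" by simp
  also have "\<dots> = exp (real (d * \<kappa>) * ln (4 * real \<kappa> * real T))"
    using pos by (subst exp_of_nat_mult, subst exp_ln) (auto simp: mult.commute)
  finally have "real n / 4 \<le> real (d * \<kappa>) * ln (4 * real \<kappa> * real T)" by simp
  moreover have "ln (4 * real \<kappa> * real T) \<le> 3 * max 1 (ln (real \<kappa> * real T))"
  proof -
    have "ln (4 * real \<kappa> * real T) = 2 * ln 2 + ln (real \<kappa> * real T)"
      using assms(2,3) ln_realpow[of 2 2] by (simp add: ln_mult)
    then show ?thesis using ln_2_less_1 by simp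
  qed
  ultimately have "real n / 4 \<le> real (d * \<kappa>) * (3 * max 1 (ln (real \<kappa> * real T)))"
    by (smt (verit) mult_left_mono of_nat_0_le_iff)
  then show ?thesis by (simp add: algebra_simps)
qed

lemma card_shattered_by_loss_class_le:
  assumes VC: "VC_dim F UNIV \<le> enat d" and "1 \<le> T" "1 \<le> \<kappa>"
    and S: "finite S" "S \<subseteq> UNIV \<times> {z. length z = T}" "shatters (loss_class T F \<kappa>) S"
  shows "real (card S) \<le> 12 * real \<kappa> * real d * max 1 (ln (real \<kappa> * real T))"
proof -
  define Q where "Q = cot_prefixes S T"
  define t :: real where "t = 1 / (4 * \<kappa> * T)"
  have "1 \<le> real \<kappa> * real T" using assms(2,3) mult_mono[of 1 "real \<kappa>" 1 "real T"] by simp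
  then have t: "0 < t" "t \<le> 1" by (auto simp: t_def field_simps)
  have "(2::real) ^ card S \<le> real (card (traces F Q)) ^ \<kappa>"
    using two_pow_card_le_card_traces_pow[OF S] unfolding Q_def
    by (metis of_nat_le_iff of_nat_numeral of_nat_power)
  also have "\<dots> \<le> ((1/t)^d * exp (t * card Q)) ^ \<kappa>"
    using S(1) by (intro power_mono card_traces_le[OF _ subset_UNIV VC t]) (auto simp: Q_def cot_prefixes_def)
  also have "\<dots> \<le> ((1/t)^d * exp (t * (card S * T))) ^ \<kappa>"
    using card_cot_prefixes_le[OF S(1), of T] t
    by (intro power_mono mult_left_mono) (auto simp: Q_def simp flip: of_nat_mult)
  also have "\<dots> = (1/t) ^ (d * \<kappa>) * exp (real \<kappa> * (t * (card S * T)))"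
    by (simp only: power_mult power_mult_distrib exp_of_nat_mult)
  also have "\<dots> = (4 * real \<kappa> * real T) ^ (d * \<kappa>) * exp (real (card S) / 4)"
    using assms(2,3) by (simp add: t_def)
  finally show ?thesis using le_of_two_pow_le assms(2,3) by blast
qed

lemma VC_dim_loss_class_le:
  assumes "VC_dim F UNIV \<le> enat d" "1 \<le> T" "1 \<le> \<kappa>"
  shows "\<exists>d'. VC_dim (loss_class T F \<kappa>) (UNIV \<times> {z. length z = T}) = enat d'
    \<and> real d' \<le> 12 * real \<kappa> * real d * max 1 (ln (real \<kappa> * real T))"
proof -
  define B where "B = 12 * real \<kappa> * real d * max 1 (ln (real \<kappa> * real T))"
  have "VC_dim (loss_class T F \<kappa>) (UNIV \<times> {z. length z = T}) \<le> enat (nat \<lfloor>B\<rfloor>)"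
  proof (rule VC_dim_le)
    fix S assume "S \<subseteq> UNIV \<times> {z. length z = T}" "finite S" "shatters (loss_class T F \<kappa>) S"
    then have "real (card S) \<le> B"
      unfolding B_def using card_shattered_by_loss_class_le assms by blast
    then show "card S \<le> nat \<lfloor>B\<rfloor>" by (simp add: le_nat_floor)
  qed
  then obtain d' where d': "VC_dim (loss_class T F \<kappa>) (UNIV \<times> {z. length z = T}) = enat d'"
    "d' \<le> nat \<lfloor>B\<rfloor>"
    using enat_ile by fastforce
  have "real d' \<le> real (nat \<lfloor>B\<rfloor>)" using d'(2) by simp
  also have "\<dots> \<le> B" by (simp add: B_def)
  finally have "real d' \<le> B" .
  then show ?thesis using d'(1) B_def by blast
qed

section \<open>Learning from chains of thought\<close>

lemma map_pmf_fst_ids_example: "map_pmf fst (ids_example T D fs P) = D"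
  by (simp add: ids_example_def map_bind_pmf map_pmf_comp map_pmf_const bind_return_pmf')

lemma set_pmf_ids_example:
  "set_pmf (ids_example T D fs P) = {(x, CoT T (fs j) x) | x j. x \<in> set_pmf D \<and> j \<in> set_pmf (P x)}"
  by (auto simp: ids_example_def)

text \<open>If the outputs disagree at \<open>x\<close>, no chain of thought of the \<open>g i\<close> can coincide with one of the
  \<open>fs j\<close> at \<open>x\<close>, since its last bit is that output.\<close>
lemma error_le_prob_loss:
  assumes fs: "\<forall>j<\<kappa>. e2e T (fs j) = e2e T (fs 0)" and P: "\<forall>x. set_pmf (P x) \<subseteq> {..<\<kappa>}"
    and T: "1 \<le> T" and g: "\<forall>i<\<kappa>. \<forall>j<\<kappa>. e2e T (g i) = e2e T (g j)" and j0: "j0 < \<kappa>"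
  shows "measure_pmf.prob D {x. e2e T (g j0) x \<noteq> e2e T (fs 0) x}
      \<le> measure_pmf.prob (ids_example T D fs P) {(x, z). \<forall>i<\<kappa>. CoT T (g i) x \<noteq> z}"
proof -
  define p where "p = ids_example T D fs P"
  define B where "B = {x. e2e T (g j0) x \<noteq> e2e T (fs 0) x}"
  have "\<forall>i<\<kappa>. CoT T (g i) x \<noteq> z" if xz: "(x, z) \<in> set_pmf p" and "x \<in> B" for x z
  proof (intro allI impI notI)
    fix i assume "i < \<kappa>" and g_z: "CoT T (g i) x = z"
    from xz obtain j where j: "j < \<kappa>" "z = CoT T (fs j) x"
      using P by (auto simp: p_def set_pmf_ids_example)
    have "e2e T (g i) x = last z" using g_z last_CoT[OF T, of "g i" x] by simp
    also have "\<dots> = e2e T (fs j) x" using j(2) last_CoT[OF T, of "fs j" x] by simp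
    also have "\<dots> = e2e T (fs 0) x" using fs j(1) by metis
    moreover have "e2e T (g j0) = e2e T (g i)" using g j0 \<open>i < \<kappa>\<close> by blast
    ultimately show False using \<open>x \<in> B\<close> by (simp add: B_def)
  qed
  then have loss: "fst -` B \<inter> set_pmf p \<subseteq> {(x, z). \<forall>i<\<kappa>. CoT T (g i) x \<noteq> z}" by fastforce
  have "measure_pmf.prob D B = measure_pmf.prob (map_pmf fst p) B"
    by (simp add: p_def map_pmf_fst_ids_example)
  also have "\<dots> = measure_pmf.prob p (fst -` B \<inter> set_pmf p)"
    by (simp add: measure_Int_set_pmf)
  also have "\<dots> \<le> measure_pmf.prob p {(x, z). \<forall>i<\<kappa>. CoT T (g i) x \<noteq> z}"
    using loss by (rule measure_pmf.finite_measure_mono) simp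
  finally show ?thesis by (simp add: p_def B_def)
qed

lemma cons_output_error_le:
  assumes net: "eps_net (ids_example T D fs P) (loss_class T F \<kappa>) \<epsilon> S" and h: "cons_output T F \<kappa> S h"
    and fs: "\<forall>j<\<kappa>. e2e T (fs j) = e2e T (fs 0)" and P: "\<forall>x. set_pmf (P x) \<subseteq> {..<\<kappa>}" and T: "1 \<le> T"
  shows "measure_pmf.prob D {x. h x \<noteq> e2e T (fs 0) x} \<le> \<epsilon>"
proof -
  obtain g j0 where g: "\<forall>i<\<kappa>. g i \<in> F" "\<forall>i<\<kappa>. \<forall>j<\<kappa>. e2e T (g i) = e2e T (g j)"
    and consistent: "\<forall>s\<in>set S. \<exists>j<\<kappa>. snd s = CoT T (g j) (fst s)"
    and j0: "j0 < \<kappa>" "h = e2e T (g j0)"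
    using h unfolding cons_output_def by blast
  have "(\<lambda>(x, z). \<forall>i<\<kappa>. CoT T (g i) x \<noteq> z) \<in> loss_class T F \<kappa>"
    using g unfolding loss_class_def by blast
  moreover have "\<not> (\<exists>s\<in>set S. (\<lambda>(x, z). \<forall>i<\<kappa>. CoT T (g i) x \<noteq> z) s)"
    using consistent by fastforce
  ultimately have "measure_pmf.prob (ids_example T D fs P) {(x, z). \<forall>i<\<kappa>. CoT T (g i) x \<noteq> z} \<le> \<epsilon>"
    using net unfolding eps_net_def by fastforce
  then show ?thesis
    using error_le_prob_loss[OF fs P T g(2) j0(1), of D] j0(2) by simp
qed

lemma cons_CoT_learns:
  assumes VC: "VC_dim (loss_class T F \<kappa>) (X \<times> {z. length z = T}) \<le> enat d"
    and T: "1 \<le> T" and \<epsilon>: "0 < \<epsilon>" "\<epsilon> < 1/2" and \<delta>: "0 < \<delta>" "\<delta> < 1"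
    and m: "120 * ((real d * ln (1/\<epsilon>) + ln (1/\<delta>)) / \<epsilon>) \<le> m"
    and D: "set_pmf D \<subseteq> X" and fs: "\<forall>j<\<kappa>. fs j \<in> F" "\<forall>j<\<kappa>. e2e T (fs j) = e2e T (fs 0)"
    and P: "\<forall>x. set_pmf (P x) \<subseteq> {..<\<kappa>}"
  shows "1 - \<delta> \<le> measure_pmf.prob (iid_pmf m (ids_example T D fs P))
    {S. \<forall>h. cons_output T F \<kappa> S h \<longrightarrow> measure_pmf.prob D {x. h x \<noteq> e2e T (fs 0) x} \<le> \<epsilon>}"
proof -
  define p where "p = ids_example T D fs P"
  have "set_pmf p \<subseteq> X \<times> {z. length z = T}"
    using D by (auto simp: p_def set_pmf_ids_example)
  moreover have "\<forall>i<\<kappa>. \<forall>j<\<kappa>. e2e T (fs i) = e2e T (fs j)" using fs(2) by metis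
  then have "(\<lambda>(x, z). \<forall>i<\<kappa>. CoT T (fs i) x \<noteq> z) \<in> loss_class T F \<kappa>"
    using fs(1) unfolding loss_class_def by blast
  moreover have "\<forall>s\<in>set_pmf p. \<not> (\<lambda>(x, z). \<forall>i<\<kappa>. CoT T (fs i) x \<noteq> z) s"
    using P by (fastforce simp: p_def set_pmf_ids_example)
  ultimately have "1 - \<delta> \<le> measure_pmf.prob (iid_pmf m p) {S. eps_net p (loss_class T F \<kappa>) \<epsilon> S}"
    using prob_eps_net_ge[OF _ VC _ _ \<epsilon> \<delta> m] by blast
  also have "\<dots> \<le> measure_pmf.prob (iid_pmf m p)
      {S. \<forall>h. cons_output T F \<kappa> S h \<longrightarrow> measure_pmf.prob D {x. h x \<noteq> e2e T (fs 0) x} \<le> \<epsilon>}"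
    using cons_output_error_le[OF _ _ fs(2) P T]
    by (intro measure_pmf.finite_measure_mono) (auto simp: p_def)
  finally show ?thesis by (simp add: p_def)
qed

theorem theoremB1:
  shows "\<exists>c::real. c > 0 \<and>
    (\<forall>(F :: (bool list \<Rightarrow> bool) set) (T :: nat) (\<kappa> :: nat). T \<ge> 1 \<longrightarrow> \<kappa> \<ge> 1 \<longrightarrow>
      (\<forall>(X :: bool list set) (d :: nat).
         VC_dim (loss_class T F \<kappa>) (X \<times> {z. length z = T}) = enat d \<longrightarrow>
         (\<forall>(\<epsilon>::real) (\<delta>::real) (m::nat). 0 < \<epsilon> \<and> \<epsilon> < 1/2 \<and> 0 < \<delta> \<and> \<delta> < 1 \<longrightarrow>
            real m \<ge> c * ((real d * ln (1/\<epsilon>) + ln (1/\<delta>)) / \<epsilon>) \<longrightarrow>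
            (\<forall>(D :: bool list pmf) (fs :: nat \<Rightarrow> bool list \<Rightarrow> bool) (P :: bool list \<Rightarrow> nat pmf).
               set_pmf D \<subseteq> X \<and> (\<forall>j<\<kappa>. fs j \<in> F) \<and> (\<forall>j<\<kappa>. e2e T (fs j) = e2e T (fs 0))
               \<and> (\<forall>x. set_pmf (P x) \<subseteq> {..<\<kappa>}) \<longrightarrow>
               measure_pmf.prob (iid_pmf m (ids_example T D fs P))
                 {S. \<forall>h. cons_output T F \<kappa> S h \<longrightarrow>
                        measure_pmf.prob D {x. h x \<noteq> e2e T (fs 0) x} \<le> \<epsilon>} \<ge> 1 - \<delta>)))
      \<and> (\<forall>d::nat. VC_dim F UNIV = enat d \<longrightarrow>
           (\<exists>d'::nat. VC_dim (loss_class T F \<kappa>) (UNIV \<times> {z. length z = T}) = enat d'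
              \<and> real d' \<le> c * real \<kappa> * real d * max 1 (ln (real \<kappa> * real T)))))"
proof (intro exI[of _ "120::real"] conjI allI impI)
  fix F :: "(bool list \<Rightarrow> bool) set" and T \<kappa> d :: nat
  assume "T \<ge> 1" "\<kappa> \<ge> 1" "VC_dim F UNIV = enat d"
  then obtain d' where "VC_dim (loss_class T F \<kappa>) (UNIV \<times> {z. length z = T}) = enat d'"
    and "real d' \<le> 12 * real \<kappa> * real d * max 1 (ln (real \<kappa> * real T))"
    using VC_dim_loss_class_le[of F d T \<kappa>] by auto
  moreover have "0 \<le> real \<kappa> * real d * max 1 (ln (real \<kappa> * real T))" by simp
  ultimately show "\<exists>d'. VC_dim (loss_class T F \<kappa>) (UNIV \<times> {z. length z = T}) = enat d'
      \<and> real d' \<le> 120 * real \<kappa> * real d * max 1 (ln (real \<kappa> * real T))"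
    by (intro exI[of _ d'] conjI) (simp_all add: mult.assoc)
qed (simp, blast intro: cons_CoT_learns[OF order_eq_refl])

end
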